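(* Let $0<\alpha_1,\alpha_2\leq 1$ and $\theta=\frac{\alpha_2-\alpha_1}{\alpha_2+\alpha_1}$. Let $f(z)=z+\sum_{n=2}^\infty a_nz^n$ belong to $\mathcal{S}^*_t(\alpha_1,\alpha_2)$. Then $|a_2|\leq(\alpha_1+\alpha_2)\cos\frac{\theta}{2}$, and for $n=3,4,\ldots$, $$|a_n|\leq\frac{\alpha_1+\alpha_2}{n-1}\cos\frac{\theta}{2}\prod_{k=2}^{n-1}\left(1+\frac{\alpha_1+\alpha_2}{k-1}\cos\frac{\theta}{2}\right).$$
   Context: $\Delta=\{z\in\mathbb{C}:|z|<1\}$. $\mathcal{S}^*_t(\alpha_1,\alpha_2)$ denotes the class of functions $f$ analytic in $\Delta$ with $f(0)=0=f'(0)-1$ satisfying $-\frac{\pi\alpha_1}{2}<\arg\left\{\frac{zf'(z)}{f(z)}\right\}<\frac{\pi\alpha_2}{2}$ for all $z\in\Delta$. *)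

theory Defs
  imports "HOL-Complex_Analysis.Complex_Analysis"
begin

text \<open>The class S*_t(alpha1, alpha2): f analytic in the unit disc, f 0 = 0, f'(0) = 1,
  and for all z in the disc, arg (z f'(z)/f(z)) lies strictly between -pi alpha1/2 and pi alpha2/2.
  At z = 0 the quotient is understood by its limit value 1 (arg 1 = 0), which always satisfies
  the condition; for z \<noteq> 0 the expression must be defined, i.e. f z \<noteq> 0, and its
  argument must exist, i.e. the quotient is nonzero.\<close>
definition strongly_starlike_t :: "real \<Rightarrow> real \<Rightarrow> (complex \<Rightarrow> complex) set" where
  "strongly_starlike_t a1 a2 = {f. f holomorphic_on ball 0 1 \<and> f 0 = 0 \<and> deriv f 0 = 1 \<and>
     (\<forall>z\<in>ball 0 1. z \<noteq> 0 \<longrightarrow>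
        f z \<noteq> 0 \<and> z * deriv f z / f z \<noteq> 0 \<and>
        - (pi * a1 / 2) < Arg (z * deriv f z / f z) \<and> Arg (z * deriv f z / f z) < pi * a2 / 2)}"

definition taylor_coeff :: "(complex \<Rightarrow> complex) \<Rightarrow> nat \<Rightarrow> complex" where
  "taylor_coeff f n = (deriv ^^ n) f 0 / of_nat (fact n)"

end

theory Submission
  imports Defs
begin

(* For f in the class, p(z) = z f'(z) / f(z) is holomorphic in the disc with p(0) = 1 and takes
   values in the sector -pi a1/2 < arg w < pi a2/2, which is convex since its opening is at most pi.
   A conformal map T of the sector onto the disc with T(1) = 0 gives |p_n| <= 1 / |T'(1)| =
   (a1 + a2) cos(pi theta/2) for all n >= 1: averaging p over the rotations of z by n-th roots of
   unity produces a sector-valued function of z^n whose first coefficient is p_n, and the Schwarz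
   lemma applies to its composition with T. Comparing coefficients in z f' = p f gives
   (n - 1) |a_n| <= B (|a_1| + ... + |a_(n-1)|), whose extremal solution is the product bound with
   B = (a1 + a2) cos(pi theta/2); the stated bound follows since cos(pi theta/2) <= cos(theta/2). *)

section \<open>Coefficients of holomorphic functions with values in a convex set\<close>

lemma nth_root_in_unit_disc:
  fixes w :: complex
  assumes "1 \<le> n" "norm w < 1"
  shows "\<exists>z. norm z < 1 \<and> z ^ n = w"
proof (cases "w = 0")
  case True
  then show ?thesis using assms by (intro exI[of _ 0]) auto
next
  case False
  define z where "z = exp (Ln w / of_nat n)"
  have "z ^ n = exp (of_nat n * (Ln w / of_nat n))"
    unfolding z_def by (rule exp_of_nat_mult[symmetric])
  also have "\<dots> = w"
    using assms False by simp
  finally have "z ^ n = w" .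
  moreover have "norm z = exp (ln (norm w) / n)"
    using False by (simp add: z_def norm_exp)
  moreover have "exp (ln (norm w) / n) < 1"
    using assms False by (simp add: divide_neg_pos)
  ultimately have "norm z < 1 \<and> z ^ n = w"
    by simp
  then show ?thesis by blast
qed

lemma sum_roots_of_unity_power:
  assumes n: "1 \<le> n"
  defines "\<omega> \<equiv> exp (2 * of_real pi * \<i> / of_nat n)"
  shows "(\<Sum>j<n. (\<omega> ^ j) ^ m) = (if n dvd m then of_nat n else 0)"
proof -
  have root_eq_1: "\<omega> ^ k = 1 \<longleftrightarrow> n dvd k" for k
  proof -
    have "\<omega> ^ k = exp (2 * of_real pi * \<i> * of_nat k / of_nat n)"
      unfolding \<omega>_def exp_of_nat_mult[symmetric] by (simp add: field_simps)
    then show ?thesis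
      using complex_root_unity_eq_1[OF n, of k] by simp
  qed
  have "(\<omega> ^ m) ^ n = (\<omega> ^ n) ^ m"
    by (simp add: power_mult[symmetric] mult.commute)
  then have "(\<omega> ^ m) ^ n = 1"
    using root_eq_1[of n] by simp
  moreover have "(\<Sum>j<n. (\<omega> ^ j) ^ m) = (\<Sum>j<n. (\<omega> ^ m) ^ j)"
    by (simp add: power_mult[symmetric] mult.commute)
  ultimately show ?thesis
    using root_eq_1[of m] by (simp add: sum_gp_strict)
qed

lemma rotation_average_sums:
  fixes p :: "complex \<Rightarrow> complex"
  assumes holp: "p holomorphic_on ball 0 1" and n: "1 \<le> n" and z: "norm z < 1"
  defines "\<omega> \<equiv> exp (2 * of_real pi * \<i> / of_nat n)"
  shows "(\<lambda>k. fps_nth (fps_expansion p 0) (k * n) * (z ^ n) ^ k) sums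
           ((\<Sum>j<n. p (\<omega> ^ j * z)) / of_nat n)"
proof -
  define c where "c = fps_nth (fps_expansion p 0)"
  have norm_\<omega>: "norm (\<omega> ^ j) = 1" for j
    by (simp add: \<omega>_def norm_power norm_exp_eq_Re)
  have "(\<lambda>m. c m * (\<omega> ^ j * z) ^ m) sums p (\<omega> ^ j * z)" for j
    using holomorphic_power_series[OF holp, of "\<omega> ^ j * z"] z
    by (simp add: c_def fps_expansion_def norm_mult norm_\<omega>)
  then have "(\<lambda>m. (\<Sum>j<n. c m * (\<omega> ^ j * z) ^ m) / of_nat n) sums
               ((\<Sum>j<n. p (\<omega> ^ j * z)) / of_nat n)"
    by (intro sums_divide sums_sum)
  moreover have "(\<Sum>j<n. c m * (\<omega> ^ j * z) ^ m) / of_nat n = (if n dvd m then c m * z ^ m else 0)"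
    for m
    using sum_roots_of_unity_power[OF n, of m] n
    by (simp add: \<omega>_def power_mult_distrib sum_distrib_left[symmetric] mult.commute)
  ultimately have "(\<lambda>m. if n dvd m then c m * z ^ m else 0) sums ((\<Sum>j<n. p (\<omega> ^ j * z)) / of_nat n)"
    by simp
  moreover have "strict_mono (\<lambda>k::nat. k * n)"
    using n by (intro strict_monoI) auto
  ultimately have "(\<lambda>k. if n dvd k * n then c (k * n) * z ^ (k * n) else 0) sums
                     ((\<Sum>j<n. p (\<omega> ^ j * z)) / of_nat n)"
    by (subst sums_mono_reindex) (auto elim!: dvdE simp: mult.commute)
  then show ?thesis
    by (simp add: c_def power_mult[symmetric] mult.commute)
qed

(* R (z ^ n) is the mean of p over the rotations of z by the n-th roots of unity. *)
lemma convex_valued_coeff_section: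
  fixes p :: "complex \<Rightarrow> complex"
  assumes holp: "p holomorphic_on ball 0 1" and pK: "\<And>z. z \<in> ball 0 1 \<Longrightarrow> p z \<in> K"
    and K: "convex K" and n: "1 \<le> n"
  obtains R where "R holomorphic_on ball 0 1" "\<And>w. w \<in> ball 0 1 \<Longrightarrow> R w \<in> K" "R 0 = p 0"
    "(R has_field_derivative fps_nth (fps_expansion p 0) n) (at 0)"
proof -
  define \<omega> :: complex where "\<omega> = exp (2 * of_real pi * \<i> / of_nat n)"
  define S where "S = Abs_fps (\<lambda>k. fps_nth (fps_expansion p 0) (k * n))"
  have S_sums: "\<exists>z. norm z < 1 \<and> (\<lambda>k. fps_nth S k * w ^ k) sums ((\<Sum>j<n. p (\<omega> ^ j * z)) / of_nat n)"
    if w: "norm w < 1" for w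
  proof -
    obtain z where "norm z < 1" "z ^ n = w"
      using nth_root_in_unit_disc[OF n w] by blast
    then show ?thesis
      using rotation_average_sums[OF holp n, of z] by (auto simp: S_def \<omega>_def)
  qed
  have radius: "1 \<le> fps_conv_radius S"
    unfolding fps_conv_radius_def
  proof (rule conv_radius_geI_ex)
    fix r :: real
    assume "0 < r" "ereal r < 1"
    then show "\<exists>z. norm z = r \<and> summable (\<lambda>k. fps_nth S k * z ^ k)"
      using S_sums[of "of_real r"] by (intro exI[of _ "of_real r"]) (auto simp: sums_iff)
  qed
  have ball_sub: "ball (0::complex) 1 \<subseteq> eball 0 (fps_conv_radius S)"
  proof
    fix z :: complex
    assume "z \<in> ball 0 1"
    then have "ereal (dist 0 z) < 1"
      by simp
    then show "z \<in> eball 0 (fps_conv_radius S)"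
      using radius by (metis in_eball_iff order_less_le_trans)
  qed
  show ?thesis
  proof
    show "eval_fps S holomorphic_on ball 0 1"
      by (rule holomorphic_on_eval_fps[OF ball_sub])
    show "eval_fps S w \<in> K" if w: "w \<in> ball 0 1" for w
    proof -
      obtain z where z: "norm z < 1"
        and sums: "(\<lambda>k. fps_nth S k * w ^ k) sums ((\<Sum>j<n. p (\<omega> ^ j * z)) / of_nat n)"
        using S_sums w by auto
      have "norm (\<omega> ^ j * z) < 1" for j
        using z by (simp add: \<omega>_def norm_mult norm_power norm_exp_eq_Re)
      then have "(\<Sum>j<n. (1 / real n) *\<^sub>R p (\<omega> ^ j * z)) \<in> K"
        using n by (intro convex_sum[OF _ K] pK) auto
      moreover have "(\<Sum>j<n. (1 / real n) *\<^sub>R p (\<omega> ^ j * z)) = (\<Sum>j<n. p (\<omega> ^ j * z)) / of_nat n"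
        by (simp add: scaleR_conv_of_real sum_divide_distrib)
      moreover have "eval_fps S w = (\<Sum>j<n. p (\<omega> ^ j * z)) / of_nat n"
        using sums by (simp add: eval_fps_def sums_iff)
      ultimately show ?thesis
        by simp
    qed
    show "eval_fps S 0 = p 0"
      by (simp add: S_def eval_fps_at_0 fps_expansion_def)
    have "(eval_fps S has_field_derivative eval_fps (fps_deriv S) 0) (at 0)"
      using subsetD[OF ball_sub, of 0]
      by (intro has_field_derivative_eval_fps) (simp add: in_eball_iff)
    then show "(eval_fps S has_field_derivative fps_nth (fps_expansion p 0) n) (at 0)"
      by (simp add: S_def eval_fps_at_0 fps_deriv_nth)
  qed
qed

lemma convex_valued_coeff_bound:
  fixes p T :: "complex \<Rightarrow> complex"
  assumes holp: "p holomorphic_on ball 0 1" and pK: "\<And>z. z \<in> ball 0 1 \<Longrightarrow> p z \<in> K"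
    and K: "convex K"
    and holT: "T holomorphic_on K" and T0: "T (p 0) = 0" and T_lt: "\<And>w. w \<in> K \<Longrightarrow> norm (T w) < 1"
    and T': "(T has_field_derivative D) (at (p 0))" and n: "1 \<le> n"
  shows "norm (D * fps_nth (fps_expansion p 0) n) \<le> 1"
proof -
  obtain R where holR: "R holomorphic_on ball 0 1" and RK: "\<And>w. w \<in> ball 0 1 \<Longrightarrow> R w \<in> K"
    and R0: "R 0 = p 0" and R': "(R has_field_derivative fps_nth (fps_expansion p 0) n) (at 0)"
    using convex_valued_coeff_section[OF holp pK K n] by blast
  have "(T \<circ> R) holomorphic_on ball 0 1"
    using RK by (intro holomorphic_on_compose_gen[OF holR holT]) auto
  moreover have "(T \<circ> R) 0 = 0" "\<And>z. norm z < 1 \<Longrightarrow> norm ((T \<circ> R) z) < 1"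
    using T0 R0 T_lt RK by auto
  ultimately have "norm (deriv (T \<circ> R) 0) \<le> 1"
    using Schwarz_Lemma(2)[of "T \<circ> R" 0] by simp
  moreover have "deriv (T \<circ> R) 0 = D * fps_nth (fps_expansion p 0) n"
    using DERIV_chain[OF T'[folded R0] R'] by (rule DERIV_imp_deriv)
  ultimately show ?thesis by simp
qed

section \<open>A conformal map of a convex sector onto the disc\<close>

(* For b1 + b2 <= pi this is the open sector -b1 < Arg w < b2 (see mem_sector_iff); the
   half-plane form makes convexity evident. *)
definition sector :: "real \<Rightarrow> real \<Rightarrow> complex set" where
  "sector b1 b2 = {w. 0 < Im (w * cis b1) \<and> Im (w * cis (- b2)) < 0}"

lemma convex_sector: "convex (sector b1 b2)"
proof -
  have half: "convex ((\<lambda>w. w * c) -` {x. Im x > 0})" for c :: complex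
    by (intro convex_linear_vimage convex_halfspace_Im_gt
        bounded_linear.linear[OF bounded_linear_mult_left])
  have "sector b1 b2 =
      (\<lambda>w. w * cis b1) -` {x. Im x > 0} \<inter> (\<lambda>w. w * - cis (- b2)) -` {x. Im x > 0}"
    by (auto simp: sector_def)
  then show ?thesis by (simp only: convex_Int half)
qed

lemma Im_mult_cis: "Im (w * cis b) = cmod w * sin (Arg w + b)"
proof -
  have "w * cis b = rcis (cmod w) (Arg w + b)"
    by (metis rcis_cmod_Arg rcis_def cis_mult mult.assoc)
  then show ?thesis by (simp add: rcis_def)
qed

lemma norm_cayley_less_1:
  fixes u v :: complex
  assumes "0 < Re u" "0 < Re v"
  shows "norm ((u - v) / (u + cnj v)) < 1"
proof -
  have "(Re u - Re v)^2 + (Im u - Im v)^2 < (Re u + Re v)^2 + (Im u - Im v)^2"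
    using assms by (simp add: power2_eq_square algebra_simps)
  then have "norm (u - v) < norm (u + cnj v)"
    by (simp add: cmod_def)
  then show ?thesis by (simp add: norm_divide divide_less_eq_1)
qed

(* Rotating the bisector of the sector onto the positive axis and raising to the power
   pi / (b1 + b2) opens the sector onto the right half-plane; 1 goes to cis (- sector_tilt b1 b2),
   which the Cayley-type transform below sends to 0. *)
definition sector_tilt :: "real \<Rightarrow> real \<Rightarrow> real" where
  "sector_tilt b1 b2 = pi * (b2 - b1) / (2 * (b1 + b2))"

definition sector_to_halfplane :: "real \<Rightarrow> real \<Rightarrow> complex \<Rightarrow> complex" where
  "sector_to_halfplane b1 b2 w =
     exp (of_real (pi / (b1 + b2)) * (Ln w - \<i> * of_real ((b2 - b1) / 2)))"

definition sector_to_disc :: "real \<Rightarrow> real \<Rightarrow> complex \<Rightarrow> complex" where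
  "sector_to_disc b1 b2 w =
     (sector_to_halfplane b1 b2 w - cis (- sector_tilt b1 b2)) /
     (sector_to_halfplane b1 b2 w + cis (sector_tilt b1 b2))"

context
  fixes b1 b2 :: real
  assumes b1: "0 < b1" and b2: "0 < b2" and b12: "b1 + b2 \<le> pi"
begin

lemma mem_sector_iff: "w \<in> sector b1 b2 \<longleftrightarrow> w \<noteq> 0 \<and> - b1 < Arg w \<and> Arg w < b2"
proof (cases "w = 0")
  case False
  then have "0 < cmod w" by simp
  then have "w \<in> sector b1 b2 \<longleftrightarrow> 0 < sin (Arg w + b1) \<and> sin (Arg w - b2) < 0"
    unfolding sector_def mem_Collect_eq Im_mult_cis
    by (simp add: zero_less_mult_iff mult_less_0_iff)
  also have "\<dots> \<longleftrightarrow> - b1 < Arg w \<and> Arg w < b2"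
  proof
    assume sin: "0 < sin (Arg w + b1) \<and> sin (Arg w - b2) < 0"
    show "- b1 < Arg w \<and> Arg w < b2"
    proof (intro conjI; rule ccontr)
      assume "\<not> - b1 < Arg w"
      then have "0 \<le> sin (- (Arg w + b1))"
        using Arg_bounded[of w] b1 by (intro sin_ge_zero) auto
      then show False using sin by (simp only: sin_minus) linarith
    next
      assume "\<not> Arg w < b2"
      then have "0 \<le> sin (Arg w - b2)"
        using Arg_bounded[of w] b2 by (intro sin_ge_zero) auto
      then show False using sin by linarith
    qed
  next
    assume arg: "- b1 < Arg w \<and> Arg w < b2"
    then have "0 < sin (Arg w + b1)" "0 < sin (b2 - Arg w)"
      using b1 b2 b12 by (intro sin_gt_zero; linarith)+
    moreover have "sin (Arg w - b2) = - sin (b2 - Arg w)"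
      by (metis minus_diff_eq sin_minus)
    ultimately show "0 < sin (Arg w + b1) \<and> sin (Arg w - b2) < 0" by simp
  qed
  finally show ?thesis using False by blast
qed (simp add: sector_def)

lemma cos_sector_tilt_pos: "0 < cos (sector_tilt b1 b2)"
proof -
  have "\<bar>b2 - b1\<bar> / (b1 + b2) < 1"
    using b1 b2 by (simp add: abs_less_iff)
  then have "pi / 2 * (\<bar>b2 - b1\<bar> / (b1 + b2)) < pi / 2 * 1"
    by (intro mult_strict_left_mono) auto
  then have "\<bar>sector_tilt b1 b2\<bar> < pi / 2"
    using b1 b2 by (simp add: sector_tilt_def abs_mult abs_divide)
  then show ?thesis
    by (intro cos_gt_zero_pi) (auto simp: abs_less_iff)
qed

lemma sector_to_halfplane_1: "sector_to_halfplane b1 b2 1 = cis (- sector_tilt b1 b2)"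
  by (simp add: sector_to_halfplane_def sector_tilt_def cis_conv_exp field_simps)

lemma Re_sector_to_halfplane_pos:
  assumes "w \<in> sector b1 b2"
  shows "0 < Re (sector_to_halfplane b1 b2 w)"
proof -
  have w: "w \<noteq> 0" "- b1 < Arg w" "Arg w < b2"
    using assms mem_sector_iff by auto
  define x where "x = pi / (b1 + b2) * (Arg w - (b2 - b1) / 2)"
  have "\<bar>Arg w - (b2 - b1) / 2\<bar> < (b1 + b2) / 2"
    using w unfolding abs_less_iff by (auto simp: field_simps)
  moreover have k: "0 < pi / (b1 + b2)"
    using b1 b2 by simp
  ultimately have "\<bar>x\<bar> < pi / (b1 + b2) * ((b1 + b2) / 2)"
    unfolding x_def abs_mult abs_of_pos[OF k] by (rule mult_strict_left_mono)
  then have "\<bar>x\<bar> < pi / 2"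
    using b1 b2 by simp
  then have "0 < cos x"
    by (intro cos_gt_zero_pi) (auto simp: abs_less_iff)
  moreover have "Im (of_real (pi / (b1 + b2)) * (Ln w - \<i> * of_real ((b2 - b1) / 2))) = x"
    using w by (simp add: x_def Arg_eq_Im_Ln)
  ultimately show ?thesis
    by (simp add: sector_to_halfplane_def Re_exp)
qed

lemma sector_Int_nonpos_Reals: "sector b1 b2 \<inter> \<real>\<^sub>\<le>\<^sub>0 = {}"
proof -
  have "Arg w = pi" if "w \<in> \<real>\<^sub>\<le>\<^sub>0" "w \<noteq> 0" for w
    using that by (auto simp: Arg_eq_pi complex_nonpos_Reals_iff complex_eq_iff)
  then show ?thesis
    using b1 b12 by (auto simp: mem_sector_iff)
qed

lemma holomorphic_sector_to_disc: "sector_to_disc b1 b2 holomorphic_on sector b1 b2"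
proof -
  have "sector_to_halfplane b1 b2 w + cis (sector_tilt b1 b2) \<noteq> 0" if "w \<in> sector b1 b2" for w
  proof -
    have "0 < Re (sector_to_halfplane b1 b2 w + cis (sector_tilt b1 b2))"
      using Re_sector_to_halfplane_pos[OF that] cos_sector_tilt_pos by simp
    then show ?thesis by (metis order_less_irrefl zero_complex.sel(1))
  qed
  then show ?thesis
    using sector_Int_nonpos_Reals unfolding sector_to_disc_def sector_to_halfplane_def
    by (intro holomorphic_intros) auto
qed

lemma sector_to_disc_1: "sector_to_disc b1 b2 1 = 0"
  by (simp add: sector_to_disc_def sector_to_halfplane_1)

lemma norm_sector_to_disc_less:
  assumes "w \<in> sector b1 b2"
  shows "norm (sector_to_disc b1 b2 w) < 1"
  using norm_cayley_less_1[OF Re_sector_to_halfplane_pos[OF assms], of "cis (- sector_tilt b1 b2)"]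
    cos_sector_tilt_pos
  by (simp add: sector_to_disc_def cis_cnj)

lemma sector_to_disc_has_field_derivative:
  "(sector_to_disc b1 b2 has_field_derivative
     cis (- sector_tilt b1 b2) * of_real (pi / (2 * (b1 + b2) * cos (sector_tilt b1 b2)))) (at 1)"
proof -
  define U where "U = sector_to_halfplane b1 b2"
  define t where "t = sector_tilt b1 b2"
  define k where "k = pi / (b1 + b2)"
  have U1: "U 1 = cis (- t)"
    by (simp add: U_def t_def sector_to_halfplane_1)
  have "(U has_field_derivative U 1 * (of_real k * (1 - 0))) (at 1)"
    using has_field_derivative_Ln[of 1] unfolding U_def sector_to_halfplane_def k_def
    by (intro DERIV_chain2[OF DERIV_exp] DERIV_cmult DERIV_diff DERIV_const) simp_all
  then have U': "(U has_field_derivative cis (- t) * of_real k) (at 1)"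
    by (simp add: U1)
  have cis_sum: "cis (- t) + cis t = of_real (2 * cos t)"
    by (simp add: complex_eq_iff)
  have c: "of_real (2 * cos t) \<noteq> (0::complex)"
    using cos_sector_tilt_pos by (simp add: t_def)
  have "((\<lambda>w. (U w - cis (- t)) / (U w + cis t)) has_field_derivative
      ((cis (- t) * k - 0) * (U 1 + cis t) - (U 1 - cis (- t)) * (cis (- t) * k + 0)) /
      ((U 1 + cis t) * (U 1 + cis t))) (at 1)"
    using c by (intro DERIV_divide DERIV_diff DERIV_add U' DERIV_const) (simp add: U1 cis_sum)
  also have "((cis (- t) * k - 0) * (U 1 + cis t) - (U 1 - cis (- t)) * (cis (- t) * k + 0)) /
      ((U 1 + cis t) * (U 1 + cis t)) = cis (- t) * of_real (k / (2 * cos t))"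
    using c by (simp add: U1 cis_sum)
  finally show ?thesis
    by (simp add: U_def t_def k_def sector_to_disc_def[abs_def] field_simps)
qed

lemma sector_valued_coeff_bound:
  assumes holp: "p holomorphic_on ball 0 1" and p0: "p 0 = 1"
    and p_sector: "\<And>z. z \<in> ball 0 1 \<Longrightarrow> p z \<in> sector b1 b2" and n: "1 \<le> n"
  shows "norm (fps_nth (fps_expansion p 0) n) \<le> 2 * (b1 + b2) / pi * cos (sector_tilt b1 b2)"
proof -
  define c where "c = 2 * (b1 + b2) * cos (sector_tilt b1 b2)"
  have c: "0 < c"
    using b1 b2 cos_sector_tilt_pos by (simp add: c_def)
  have "norm (cis (- sector_tilt b1 b2) * of_real (pi / c) * fps_nth (fps_expansion p 0) n) \<le> 1"
    using sector_to_disc_1 norm_sector_to_disc_less sector_to_disc_has_field_derivative p0 n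
    by (intro convex_valued_coeff_bound[OF holp p_sector convex_sector holomorphic_sector_to_disc])
      (simp_all add: c_def)
  then have "pi / c * norm (fps_nth (fps_expansion p 0) n) \<le> 1"
    using c by (simp only: norm_mult norm_cis norm_of_real) simp
  then show ?thesis
    using c by (simp add: c_def field_simps)
qed

end

section \<open>The coefficient recursion of starlike-type functions\<close>

lemma starlike_quotient_exists:
  fixes f :: "complex \<Rightarrow> complex"
  assumes holf: "f holomorphic_on ball 0 1" and f0: "f 0 = 0" and df0: "deriv f 0 \<noteq> 0"
    and f_nz: "\<And>z. z \<in> ball 0 1 \<Longrightarrow> z \<noteq> 0 \<Longrightarrow> f z \<noteq> 0"
  obtains p where "p holomorphic_on ball 0 1" "p 0 = 1"
    "\<And>z. z \<in> ball 0 1 \<Longrightarrow> p z * f z = z * deriv f z"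
proof -
  define g where "g = (\<lambda>z. if z = 0 then deriv f 0 else (f z - f 0) / (z - 0))"
  have holg: "g holomorphic_on ball 0 1"
    unfolding g_def by (rule pole_lemma[OF holf]) simp
  have f_eq: "f = (\<lambda>z. z * g z)"
    using f0 by (auto simp: g_def)
  have g_nz: "g z \<noteq> 0" if "z \<in> ball 0 1" for z
    using f_nz[OF that] df0 by (auto simp: g_def f0)
  define p where "p = (\<lambda>z. 1 + z * deriv g z / g z)"
  show ?thesis
  proof
    show "p holomorphic_on ball 0 1"
      unfolding p_def using g_nz by (intro holomorphic_intros holomorphic_deriv[OF holg] holg) auto
    show "p 0 = 1"
      by (simp add: p_def)
    show "p z * f z = z * deriv f z" if z: "z \<in> ball 0 1" for z
    proof -
      have "((\<lambda>z. z * g z) has_field_derivative 1 * g z + deriv g z * z) (at z)"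
        by (rule DERIV_mult[OF DERIV_ident holomorphic_derivI[OF holg open_ball z]])
      then have "deriv f z = g z + z * deriv g z"
        unfolding f_eq by (simp add: DERIV_imp_deriv)
      moreover have "f z = z * g z"
        by (simp add: f_eq)
      ultimately show ?thesis
        using g_nz[OF z] by (simp add: p_def field_simps)
    qed
  qed
qed

lemma fps_expansion_starlike_identity:
  fixes f p :: "complex \<Rightarrow> complex"
  assumes holf: "f holomorphic_on ball 0 1" and holp: "p holomorphic_on ball 0 1"
    and eq: "\<And>z. z \<in> ball 0 1 \<Longrightarrow> p z * f z = z * deriv f z"
  shows "fps_X * fps_deriv (fps_expansion f 0) = fps_expansion p 0 * fps_expansion f 0"
proof (rule fps_expansion_unique_complex)
  have F: "f has_fps_expansion fps_expansion f 0"
    by (rule has_fps_expansion_fps_expansion[OF open_ball _ holf]) simp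
  have P: "p has_fps_expansion fps_expansion p 0"
    by (rule has_fps_expansion_fps_expansion[OF open_ball _ holp]) simp
  show "(\<lambda>z. z * deriv f z) has_fps_expansion fps_X * fps_deriv (fps_expansion f 0)"
    by (intro has_fps_expansion_mult has_fps_expansion_fps_X has_fps_expansion_deriv F)
  have "eventually (\<lambda>z. z \<in> ball (0::complex) 1) (nhds 0)"
    by (intro eventually_nhds_in_open) auto
  then have "eventually (\<lambda>z. p z * f z = z * deriv f z) (nhds 0)"
    by eventually_elim (rule eq)
  from has_fps_expansion_cong[OF this refl] has_fps_expansion_mult[OF P F]
  show "(\<lambda>z. z * deriv f z) has_fps_expansion fps_expansion p 0 * fps_expansion f 0"
    by simp
qed

lemma coeff_recursion_le:
  fixes F P :: "'a :: real_normed_field fps"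
  assumes eq: "fps_X * fps_deriv F = P * F" and F0: "F $ 0 = 0" and P0: "P $ 0 = 1"
    and P_le: "\<And>m. 1 \<le> m \<Longrightarrow> norm (P $ m) \<le> B" and n: "2 \<le> n"
  shows "real (n - 1) * norm (F $ n) \<le> B * (\<Sum>k=1..n-1. norm (F $ k))"
proof -
  obtain m where m: "n = Suc m" "1 \<le> m"
    using n by (metis Suc_le_D Suc_le_mono one_add_one plus_1_eq_Suc)
  have "of_nat n * F $ n = (fps_X * fps_deriv F) $ n"
    using m by simp
  also have "\<dots> = (\<Sum>i=0..n. P $ i * F $ (n - i))"
    by (simp add: eq fps_mult_nth)
  also have "\<dots> = F $ n + (\<Sum>i=1..m. P $ i * F $ (n - i))"
    unfolding m(1) using F0 P0 by (simp add: sum.atLeast0_atMost_Suc sum.atLeast_Suc_atMost)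
  finally have "of_nat m * F $ n = (\<Sum>i=1..m. P $ i * F $ (n - i))"
    using m by (simp add: algebra_simps)
  then have "real m * norm (F $ n) = norm (\<Sum>i=1..m. P $ i * F $ (n - i))"
    by (metis norm_mult norm_of_nat)
  also have "\<dots> \<le> (\<Sum>i=1..m. norm (P $ i) * norm (F $ (n - i)))"
    by (rule order_trans[OF norm_sum]) (simp add: norm_mult)
  also have "\<dots> \<le> (\<Sum>i=1..m. B * norm (F $ (n - i)))"
    using P_le by (intro sum_mono mult_right_mono) auto
  also have "\<dots> = B * (\<Sum>k=1..m. norm (F $ k))"
    unfolding sum_distrib_left m(1) by (subst sum.atLeastAtMost_rev) simp
  finally show ?thesis
    using m by simp
qed

(* The solution of (n - 1) M n = B * (1 + M 2 + ... + M (n - 1)), the extremal case of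
   coeff_recursion_le with M 1 = 1. *)
definition coeff_majorant :: "real \<Rightarrow> nat \<Rightarrow> real" where
  "coeff_majorant B n = B / real (n - 1) * (\<Prod>k=2..n-1. 1 + B / real (k - 1))"

lemma coeff_majorant_recurrence:
  "B * (1 + (\<Sum>k=2..Suc m. coeff_majorant B k)) = real (Suc m) * coeff_majorant B (Suc (Suc m))"
proof (induction m)
  case 0
  show ?case by (simp add: coeff_majorant_def)
next
  case (Suc m)
  define P where "P = (\<Prod>k=2..Suc m. 1 + B / real (k - 1))"
  have majorant: "coeff_majorant B (Suc (Suc m)) = B / real (Suc m) * P"
    by (simp add: coeff_majorant_def P_def)
  have "B * (1 + (\<Sum>k=2..Suc (Suc m). coeff_majorant B k))
        = real (Suc m) * coeff_majorant B (Suc (Suc m)) + B * coeff_majorant B (Suc (Suc m))"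
    using Suc.IH by (simp add: sum.cl_ivl_Suc algebra_simps)
  also have "\<dots> = (real (Suc m) + B) * (B / real (Suc m) * P)"
    by (simp only: majorant algebra_simps)
  also have "\<dots> = B * (P * (1 + B / real (Suc m)))"
    by (simp add: field_simps)
  also have "\<dots> = real (Suc (Suc m)) * (B / real (Suc (Suc m)) * (P * (1 + B / real (Suc m))))"
    by simp
  also have "\<dots> = real (Suc (Suc m)) * coeff_majorant B (Suc (Suc (Suc m)))"
    by (simp add: coeff_majorant_def prod.cl_ivl_Suc P_def)
  finally show ?case .
qed

lemma le_coeff_majorant:
  fixes a :: "nat \<Rightarrow> real"
  assumes B: "0 \<le> B" and a1: "a 1 \<le> 1"
    and rec: "\<And>n. 2 \<le> n \<Longrightarrow> real (n - 1) * a n \<le> B * (\<Sum>k=1..n-1. a k)"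
  shows "2 \<le> n \<Longrightarrow> a n \<le> coeff_majorant B n"
proof (induction n rule: less_induct)
  case (less n)
  then obtain m where m: "n = Suc (Suc m)"
    by (metis add_2_eq_Suc le_Suc_ex)
  have "(\<Sum>k=1..n-1. a k) = a 1 + (\<Sum>k=2..Suc m. a k)"
    unfolding m by (simp add: sum.atLeast_Suc_atMost numeral_2_eq_2)
  also have "\<dots> \<le> 1 + (\<Sum>k=2..Suc m. coeff_majorant B k)"
    using a1 less.IH m by (intro add_mono sum_mono) auto
  finally have sum_le: "(\<Sum>k=1..n-1. a k) \<le> 1 + (\<Sum>k=2..Suc m. coeff_majorant B k)" .
  have "real (Suc m) * a n \<le> B * (\<Sum>k=1..n-1. a k)"
    using rec[OF less.prems] m by simp
  also have "\<dots> \<le> B * (1 + (\<Sum>k=2..Suc m. coeff_majorant B k))"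
    using sum_le B by (rule mult_left_mono)
  also have "\<dots> = real (Suc m) * coeff_majorant B n"
    using coeff_majorant_recurrence m by simp
  finally show ?case
    by (rule mult_left_le_imp_le) simp
qed

lemma coeff_majorant_mono:
  assumes B: "0 \<le> B" "B \<le> B'"
  shows "coeff_majorant B n \<le> coeff_majorant B' n"
proof -
  have factor: "0 \<le> 1 + B / real (k - 1) \<and> 1 + B / real (k - 1) \<le> 1 + B' / real (k - 1)" for k
    using B by (auto intro: divide_right_mono)
  then have "(\<Prod>k=2..n-1. 1 + B / real (k - 1)) \<le> (\<Prod>k=2..n-1. 1 + B' / real (k - 1))"
    by (rule prod_mono)
  moreover have "0 \<le> (\<Prod>k=2..n-1. 1 + B / real (k - 1))"
    by (rule prod_nonneg) (use factor in blast)
  moreover have "B / real (n - 1) \<le> B' / real (n - 1)"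
    using B by (intro divide_right_mono) auto
  ultimately show ?thesis
    unfolding coeff_majorant_def using B by (intro mult_mono) auto
qed

section \<open>The class of strongly starlike functions of order (a1, a2)\<close>

lemma half_pi_angles_bounds:
  assumes "0 < a1" "0 < a2" "a1 + a2 \<le> 2"
  shows "0 < pi * a1 / 2" "0 < pi * a2 / 2" "pi * a1 / 2 + pi * a2 / 2 \<le> pi"
proof -
  have "pi * a1 / 2 + pi * a2 / 2 = pi * ((a1 + a2) / 2)"
    by (simp add: field_simps)
  also have "\<dots> \<le> pi"
    using assms by (simp add: mult_left_le)
  finally show "pi * a1 / 2 + pi * a2 / 2 \<le> pi" .
qed (use assms in auto)

lemma strongly_starlike_t_quotient:
  fixes f :: "complex \<Rightarrow> complex"
  assumes f: "f \<in> strongly_starlike_t a1 a2" and a: "0 < a1" "0 < a2" "a1 + a2 \<le> 2"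
  obtains p where "p holomorphic_on ball 0 1" "p 0 = 1"
    "\<And>z. z \<in> ball 0 1 \<Longrightarrow> p z \<in> sector (pi * a1 / 2) (pi * a2 / 2)"
    "fps_X * fps_deriv (fps_expansion f 0) = fps_expansion p 0 * fps_expansion f 0"
proof -
  have holf: "f holomorphic_on ball 0 1" and f0: "f 0 = 0" and df0: "deriv f 0 = 1"
    and arg: "\<And>z. z \<in> ball 0 1 \<Longrightarrow> z \<noteq> 0 \<Longrightarrow> f z \<noteq> 0 \<and> z * deriv f z / f z \<noteq> 0 \<and>
        - (pi * a1 / 2) < Arg (z * deriv f z / f z) \<and> Arg (z * deriv f z / f z) < pi * a2 / 2"
    using f unfolding strongly_starlike_t_def by auto
  obtain p where holp: "p holomorphic_on ball 0 1" and p0: "p 0 = 1"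
    and eq: "\<And>z. z \<in> ball 0 1 \<Longrightarrow> p z * f z = z * deriv f z"
    using starlike_quotient_exists[OF holf f0] df0 arg by auto
  note b = half_pi_angles_bounds[OF a]
  show ?thesis
  proof
    show "p z \<in> sector (pi * a1 / 2) (pi * a2 / 2)" if z: "z \<in> ball 0 1" for z
    proof (cases "z = 0")
      case True
      then show ?thesis
        using b by (simp add: p0 mem_sector_iff[OF b])
    next
      case False
      then have "p z = z * deriv f z / f z"
        using eq[OF z] arg[OF z] by (simp add: field_simps)
      then show ?thesis
        using arg[OF z False] by (simp add: mem_sector_iff[OF b])
    qed
  qed (use holp p0 fps_expansion_starlike_identity[OF holf holp eq] in auto)
qed

lemma strongly_starlike_t_taylor_coeff_le:
  assumes a: "0 < a1" "0 < a2" "a1 + a2 \<le> 2"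
    and f: "f \<in> strongly_starlike_t a1 a2" and n: "2 \<le> n"
  shows "norm (taylor_coeff f n) \<le>
           coeff_majorant ((a1 + a2) * cos (pi * (a2 - a1) / (2 * (a1 + a2)))) n"
proof -
  define b1 b2 where "b1 = pi * a1 / 2" and "b2 = pi * a2 / 2"
  obtain p where holp: "p holomorphic_on ball 0 1" and p0: "p 0 = 1"
    and p_sector: "\<And>z. z \<in> ball 0 1 \<Longrightarrow> p z \<in> sector b1 b2"
    and eq: "fps_X * fps_deriv (fps_expansion f 0) = fps_expansion p 0 * fps_expansion f 0"
    using strongly_starlike_t_quotient[OF f a] unfolding b1_def b2_def by blast
  have b: "0 < b1" "0 < b2" "b1 + b2 \<le> pi"
    using half_pi_angles_bounds[OF a] by (simp_all add: b1_def b2_def)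
  define B where "B = (a1 + a2) * cos (pi * (a2 - a1) / (2 * (a1 + a2)))"
  have sum: "b1 + b2 = pi * (a1 + a2) / 2" and diff: "b2 - b1 = pi * (a2 - a1) / 2"
    by (simp_all add: b1_def b2_def field_simps)
  have "sector_tilt b1 b2 = pi * (a2 - a1) / (2 * (a1 + a2))"
    unfolding sector_tilt_def sum diff by simp
  then have B: "2 * (b1 + b2) / pi * cos (sector_tilt b1 b2) = B"
    by (simp add: B_def sum)
  have P_le: "norm (fps_expansion p 0 $ m) \<le> B" if "1 \<le> m" for m
    using sector_valued_coeff_bound[OF b holp p0 p_sector that] B by simp
  have "0 \<le> B"
    unfolding B[symmetric] using b cos_sector_tilt_pos[OF b] by simp
  have f0: "f 0 = 0" and df0: "deriv f 0 = 1"
    using f by (auto simp: strongly_starlike_t_def)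
  have "norm (fps_expansion f 0 $ n) \<le> coeff_majorant B n"
  proof (rule le_coeff_majorant[OF \<open>0 \<le> B\<close> _ _ n])
    show "norm (fps_expansion f 0 $ 1) \<le> 1"
      by (simp add: fps_expansion_def df0)
    show "real (k - 1) * norm (fps_expansion f 0 $ k) \<le>
        B * (\<Sum>j=1..k-1. norm (fps_expansion f 0 $ j))" if "2 \<le> k" for k
      using coeff_recursion_le[OF eq _ _ P_le that] by (simp add: fps_expansion_def f0 p0)
  qed
  then show ?thesis
    by (simp add: B_def taylor_coeff_def fps_expansion_def)
qed

lemma cos_pi_half_mult_bounds:
  fixes x :: real
  assumes "\<bar>x\<bar> < 1"
  shows "0 < cos (pi * (x / 2))" "cos (pi * (x / 2)) \<le> cos (x / 2)"
proof -
  have "pi * \<bar>x\<bar> < pi * 1"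
    using assms by (intro mult_strict_left_mono) auto
  then have "\<bar>pi * (x / 2)\<bar> < pi / 2"
    by (simp add: abs_mult)
  then show "0 < cos (pi * (x / 2))"
    unfolding abs_less_iff by (intro cos_gt_zero_pi) linarith+
  have "\<bar>x / 2\<bar> \<le> \<bar>pi * (x / 2)\<bar>"
    using mult_right_mono[of 1 pi "\<bar>x / 2\<bar>"] pi_ge_two by (simp add: abs_mult)
  with \<open>\<bar>pi * (x / 2)\<bar> < pi / 2\<close> have "cos \<bar>pi * (x / 2)\<bar> \<le> cos \<bar>x / 2\<bar>"
    by (intro cos_monotone_0_pi_le) auto
  then show "cos (pi * (x / 2)) \<le> cos (x / 2)"
    by (simp only: cos_abs_real)
qed

theorem theorem3p2:
  fixes a1 a2 \<theta> :: real and f :: "complex \<Rightarrow> complex"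
  assumes "0 < a1" "a1 \<le> 1" "0 < a2" "a2 \<le> 1"
    and "\<theta> = (a2 - a1) / (a2 + a1)"
    and "f \<in> strongly_starlike_t a1 a2"
  shows "norm (taylor_coeff f 2) \<le> (a1 + a2) * cos (\<theta> / 2) \<and>
         (\<forall>n\<ge>3. norm (taylor_coeff f n) \<le>
           (a1 + a2) / real (n - 1) * cos (\<theta> / 2) *
           (\<Prod>k=2..n-1. 1 + (a1 + a2) / real (k - 1) * cos (\<theta> / 2)))"
proof -
  have "\<bar>a2 - a1\<bar> < a2 + a1"
    using assms(1,3) by (simp add: abs_less_iff)
  then have \<theta>: "\<bar>\<theta>\<bar> < 1" "pi * (a2 - a1) / (2 * (a1 + a2)) = pi * (\<theta> / 2)"
    unfolding assms(5) by (simp_all add: abs_divide add.commute)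
  have B: "0 \<le> (a1 + a2) * cos (pi * (a2 - a1) / (2 * (a1 + a2)))"
    "(a1 + a2) * cos (pi * (a2 - a1) / (2 * (a1 + a2))) \<le> (a1 + a2) * cos (\<theta> / 2)"
    using cos_pi_half_mult_bounds[OF \<theta>(1)] assms(1,3) unfolding \<theta>(2) by simp_all
  have "a1 + a2 \<le> 2"
    using assms(2,4) by simp
  then have bound: "norm (taylor_coeff f n) \<le> coeff_majorant ((a1 + a2) * cos (\<theta> / 2)) n"
    if "2 \<le> n" for n
    by (rule order_trans[OF strongly_starlike_t_taylor_coeff_le[OF assms(1,3) _ assms(6) that]
          coeff_majorant_mono[OF B]])
  show ?thesis
  proof (intro conjI allI impI)
    show "norm (taylor_coeff f 2) \<le> (a1 + a2) * cos (\<theta> / 2)"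
      using bound[of 2] by (simp add: coeff_majorant_def)
    fix n :: nat
    assume "3 \<le> n"
    then show "norm (taylor_coeff f n) \<le> (a1 + a2) / real (n - 1) * cos (\<theta> / 2) *
        (\<Prod>k=2..n-1. 1 + (a1 + a2) / real (k - 1) * cos (\<theta> / 2))"
      using bound[of n] by (simp add: coeff_majorant_def)
  qed
qed

end
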